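(* Let $p$ be an odd prime, $q\in\mathbb{C}_p$ with $|q-1|_p<1$, $\alpha\in\mathbb{N}\cup\{0\}$, $h\in\mathbb{N}$. For every integer $n>1$, \[ \widetilde{G}_{n,q}^{(\alpha,h)}(2)=nq^{-h}[2]_q+q^{-2h}\,\widetilde{G}_{n,q}^{(\alpha,h)}. \]
   Context: For $x\in\mathbb{Z}_p$ write $[x]_q=\frac{1-q^x}{1-q}$. For a uniformly differentiable $f:\mathbb{Z}_p\to\mathbb{C}_p$, the fermionic $p$-adic $q$-integral is $\int_{\mathbb{Z}_p}f(\xi)\,d\mu_{-q}(\xi)=\lim_{N\to\infty}\frac{1}{[p^N]_{-q}}\sum_{\xi=0}^{p^N-1}f(\xi)(-q)^{\xi}$, with $[p^N]_{-q}=\frac{1+q^{p^N}}{1+q}$. The $(h,q)$-Genocchi polynomials with weight $\alpha$ are defined for $n\ge0$, $x\in\mathbb{Z}_p$ by $\frac{\widetilde{G}_{n+1,q}^{(\alpha,h)}(x)}{n+1}=\int_{\mathbb{Z}_p}q^{(h-1)\xi}[x+\xi]_{q^{\alpha}}^n\,d\mu_{-q}(\xi)$; the numbers are $\widetilde{G}_{n,q}^{(\alpha,h)}=\widetilde{G}_{n,q}^{(\alpha,h)}(0)$, with $\widetilde{G}_{0,q}^{(\alpha,h)}=0$. *)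

theory Defs
  imports Complex_Main "HOL-Computational_Algebra.Primes"
begin

text \<open>We model C_p
  by an arbitrary field of characteristic 0 carrying an absolute value absv that is
  non-archimedean, restricts to the p-adic absolute value on the rationals
  (absv p = 1/p), is complete and is algebraically closed.  C_p is such a field.\<close>

definition abs_lim :: "('a::field_char_0 \<Rightarrow> real) \<Rightarrow> (nat \<Rightarrow> 'a) \<Rightarrow> 'a \<Rightarrow> bool" where
  "abs_lim absv s L \<longleftrightarrow> (\<forall>e>0. \<exists>N0. \<forall>N\<ge>N0. absv (s N - L) < e)"

definition Cp_like :: "('a::field_char_0 \<Rightarrow> real) \<Rightarrow> nat \<Rightarrow> bool" where
  "Cp_like absv p \<longleftrightarrow>
     (\<forall>x. absv x \<ge> 0) \<and> (\<forall>x. absv x = 0 \<longleftrightarrow> x = 0) \<and>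
     (\<forall>x y. absv (x * y) = absv x * absv y) \<and>
     (\<forall>x y. absv (x + y) \<le> max (absv x) (absv y)) \<and>
     absv (of_nat p) = 1 / real p \<and>
     (\<forall>s. (\<forall>e>0. \<exists>N0. \<forall>m\<ge>N0. \<forall>n\<ge>N0. absv (s m - s n) < e) \<longrightarrow> (\<exists>L. abs_lim absv s L)) \<and>
     (\<forall>n::nat. \<forall>c::nat \<Rightarrow> 'a. n \<ge> 1 \<longrightarrow> (\<exists>x. x ^ n + (\<Sum>i<n. c i * x ^ i) = 0))"

definition qnum :: "'a::field_char_0 \<Rightarrow> int \<Rightarrow> 'a" where
  "qnum q x = (if q = 1 then of_int x else (1 - q powi x) / (1 - q))"

text \<open>Fermionic p-adic q-integral; only the values of f at nonnegative integers
  enter the defining limit.\<close>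
definition ferm_int :: "('a::field_char_0 \<Rightarrow> real) \<Rightarrow> nat \<Rightarrow> 'a \<Rightarrow> (nat \<Rightarrow> 'a) \<Rightarrow> 'a" where
  "ferm_int absv p q f = (THE L. abs_lim absv
      (\<lambda>N. (1 / ((1 + q ^ (p ^ N)) / (1 + q))) * (\<Sum>\<xi><p ^ N. f \<xi> * (- q) ^ \<xi>)) L)"

definition genocchi :: "('a::field_char_0 \<Rightarrow> real) \<Rightarrow> nat \<Rightarrow> 'a \<Rightarrow> nat \<Rightarrow> nat \<Rightarrow> nat \<Rightarrow> int \<Rightarrow> 'a" where
  "genocchi absv p q \<alpha> h n x =
     (if n = 0 then 0 else
        of_nat n * ferm_int absv p q
          (\<lambda>\<xi>. q ^ ((h - 1) * \<xi>) * qnum (q ^ \<alpha>) (x + int \<xi>) ^ (n - 1)))"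

end

theory Submission imports Defs begin

text \<open>If \<open>f(\<xi> + j p\<^sup>N) - f(\<xi>)\<close> is bounded by \<open>c\<^sup>N\<close> for a fixed \<open>c < 1\<close>, consecutive
  sums differ by at most \<open>c\<^sup>N\<close>, so the limit exists by completeness; and since \<open>p\<^sup>N\<close> is odd,
  the alternating sums telescope to \<open>q I(f(\<xi> + 1)) + I(f) = [2]\<^sub>q f(0)\<close>.  The Genocchi
  integrand \<open>f\<^sub>x\<close> satisfies \<open>f\<^sub>x(\<xi> + 1) = q\<^bsup>h-1\<^esup> f\<^sub>x\<^sub>+\<^sub>1(\<xi>)\<close>, hence
  \<open>q\<^sup>h G\<^sub>n(x + 1) + G\<^sub>n(x) = n [2]\<^sub>q [x]\<^bsup>n-1\<^esup>\<close>, and the cases \<open>x = 0\<close> and \<open>x = 1\<close> combine to the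
  theorem.\<close>

definition qsum :: "'a::comm_semiring_1 \<Rightarrow> nat \<Rightarrow> 'a" where
  "qsum r m = (\<Sum>i<m. r ^ i)"

lemma qnum_of_nat: "qnum r (int m) = qsum r m"
proof (cases "r = 1")
  case True
  then show ?thesis by (simp add: qnum_def qsum_def)
next
  case False
  have "1 - r ^ m = (1 - r) * qsum r m"
    unfolding qsum_def by (rule one_diff_power_eq)
  then show ?thesis using False by (simp add: qnum_def field_simps)
qed

lemma qsum_add: "qsum r (m + k) = qsum r m + r ^ m * qsum r k"
  unfolding qsum_def by (induction k) (simp_all add: algebra_simps power_add)

lemma qsum_mult: "qsum r (a * b) = qsum r a * qsum (r ^ a) b"
proof (induction b)
  case 0
  then show ?case by (simp add: qsum_def)
next
  case (Suc b)
  have "qsum r (a * Suc b) = qsum r (a * b) + r ^ (a * b) * qsum r a"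
    using qsum_add[of r "a * b" a] by (simp add: add.commute)
  then show ?case using Suc by (simp add: qsum_def power_mult algebra_simps)
qed

lemma power_minus_one_eq_qsum: "(r::'a::comm_ring_1) ^ m - 1 = (r - 1) * qsum r m"
  unfolding qsum_def by (rule power_diff_1_eq)

lemma sum_lessThan_mult_blocks:
  fixes g :: "nat \<Rightarrow> 'a::comm_monoid_add"
  shows "(\<Sum>i<n * M. g i) = (\<Sum>j<n. \<Sum>\<xi><M. g (\<xi> + j * M))"
proof -
  have "sum g {j * M..<j * M + M} = (\<Sum>\<xi><M. g (\<xi> + j * M))" for j
    using sum.shift_bounds_nat_ivl[of g 0 "j * M" M] by (simp add: atLeast0LessThan add.commute)
  then show ?thesis using sum.nat_group[of g M n] by simp
qed

lemma alternating_power_sum: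
  fixes q :: "'a::comm_ring_1"
  assumes "odd M" "odd n"
  shows "(1 + q ^ M) * (\<Sum>j<n. (- q) ^ (j * M)) = 1 + q ^ (M * n)"
proof -
  have "(- q) ^ (j * M) = (- (q ^ M)) ^ j" for j
    using assms(1) by (simp add: power_mult mult.commute)
  then have "(1 - (- (q ^ M))) * (\<Sum>j<n. (- q) ^ (j * M)) = 1 - (- (q ^ M)) ^ n"
    using one_diff_power_eq[of "- (q ^ M)" n] by simp
  then show ?thesis using assms(2) by (simp add: power_mult)
qed

lemma alternating_sum_shift:
  fixes q :: "'a::comm_ring_1"
  assumes "odd M"
  shows "q * (\<Sum>\<xi><M. f (Suc \<xi>) * (- q) ^ \<xi>) + (\<Sum>\<xi><M. f \<xi> * (- q) ^ \<xi>) = f 0 + q ^ M * f M"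
proof -
  have "(\<Sum>\<xi><Suc M. f \<xi> * (- q) ^ \<xi>) = f 0 - q * (\<Sum>\<xi><M. f (Suc \<xi>) * (- q) ^ \<xi>)"
    by (subst sum.lessThan_Suc_shift) (simp add: sum_distrib_left sum_negf algebra_simps)
  then show ?thesis using assms by (simp add: algebra_simps)
qed

locale nonarch_abs =
  fixes absv :: "'a::field_char_0 \<Rightarrow> real"
  assumes abs_nonneg: "absv x \<ge> 0"
    and abs_eq_0_iff: "absv x = 0 \<longleftrightarrow> x = 0"
    and abs_mult: "absv (x * y) = absv x * absv y"
    and abs_add_le_max: "absv (x + y) \<le> max (absv x) (absv y)"
begin

lemma abs_zero [simp]: "absv 0 = 0"
  using abs_eq_0_iff by simp

lemma abs_one [simp]: "absv 1 = 1"
proof -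
  have "absv 1 = absv 1 * absv 1" using abs_mult[of 1 1] by simp
  moreover have "absv 1 \<noteq> 0" using abs_eq_0_iff by simp
  ultimately show ?thesis by simp
qed

lemma abs_minus [simp]: "absv (- x) = absv x"
proof -
  have "absv (- 1) ^ 2 = 1" using abs_mult[of "- 1" "- 1"] by (simp add: power2_eq_square)
  then have "absv (- 1) = 1 \<or> absv (- 1) = - 1" by (simp only: power2_eq_1_iff)
  then have "absv (- 1) = 1" using abs_nonneg[of "- 1"] by linarith
  then show ?thesis using abs_mult[of "- 1" x] by simp
qed

lemma abs_power: "absv (x ^ n) = absv x ^ n"
  by (induction n) (simp_all add: abs_mult)

lemma abs_diff_le_max: "absv (x - y) \<le> max (absv x) (absv y)"
  using abs_add_le_max[of x "- y"] by simp

lemma abs_inverse: "absv (inverse x) = inverse (absv x)"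
proof (cases "x = 0")
  case False
  then have "absv x * absv (inverse x) = 1" using abs_mult[of x "inverse x"] by simp
  then show ?thesis by (metis inverse_unique)
qed simp

lemma abs_divide: "absv (x / y) = absv x / absv y"
  by (simp add: divide_inverse abs_mult abs_inverse)

lemma abs_mult_le: "absv x \<le> 1 \<Longrightarrow> absv y \<le> B \<Longrightarrow> absv (x * y) \<le> B"
  using abs_nonneg[of x] abs_nonneg[of y] abs_mult[of x y]
  by (metis dual_order.trans mult.commute mult_le_cancel_right1 mult_left_le_one_le)

lemma abs_add_le: "absv x \<le> B \<Longrightarrow> absv y \<le> B \<Longrightarrow> absv (x + y) \<le> B"
  using abs_add_le_max[of x y] by linarith

lemma abs_add_less: "absv x < B \<Longrightarrow> absv y < B \<Longrightarrow> absv (x + y) < B"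
  using abs_add_le_max[of x y] by linarith

lemma abs_diff_le: "absv x \<le> B \<Longrightarrow> absv y \<le> B \<Longrightarrow> absv (x - y) \<le> B"
  using abs_add_le[of x B "- y"] by simp

lemma abs_sum_le:
  assumes "finite A" "\<And>i. i \<in> A \<Longrightarrow> absv (g i) \<le> B" "0 \<le> B"
  shows "absv (sum g A) \<le> B"
  using assms
proof (induction A rule: finite_induct)
  case (insert x F)
  then show ?case by (simp add: abs_add_le)
qed simp

lemma abs_of_nat_le_1: "absv (of_nat k) \<le> 1"
proof (induction k)
  case (Suc k)
  then show ?case using abs_add_le_max[of 1 "of_nat k"] by simp
qed simp

lemma abs_add_eq_of_less: "absv a < absv b \<Longrightarrow> absv (a + b) = absv b"
  using abs_add_le_max[of a b] abs_diff_le_max[of "a + b" a] by simp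

lemma abs_qsum_le_1: "absv r = 1 \<Longrightarrow> absv (qsum r m) \<le> 1"
  unfolding qsum_def by (rule abs_sum_le) (auto simp: abs_power)

lemma abs_power_minus_one_le: "absv r = 1 \<Longrightarrow> absv (r ^ m - 1) \<le> absv (r - 1)"
  using power_minus_one_eq_qsum[of r m] abs_qsum_le_1[of r m] abs_nonneg[of "r - 1"]
  by (simp add: abs_mult mult_left_le)

lemma abs_qsum_le_max:
  assumes "absv r = 1"
  shows "absv (qsum r m) \<le> max (absv (of_nat m)) (absv (r - 1))"
proof -
  have "qsum r m = of_nat m + (\<Sum>i<m. r ^ i - 1)"
    unfolding qsum_def by (simp add: sum_subtractf)
  moreover have "absv (\<Sum>i<m. r ^ i - 1) \<le> absv (r - 1)"
    by (rule abs_sum_le) (auto simp: abs_power_minus_one_le assms abs_nonneg)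
  ultimately show ?thesis using abs_add_le_max[of "of_nat m" "\<Sum>i<m. r ^ i - 1"] by auto
qed

lemma abs_qsum_power_le:
  assumes "absv r = 1" "absv (of_nat m) \<le> c" "absv (r - 1) \<le> c"
  shows "absv (qsum r (m ^ N)) \<le> c ^ N"
proof (induction N)
  case (Suc N)
  have "absv (r ^ m ^ N) = 1" using assms(1) by (simp add: abs_power)
  moreover have "absv (r ^ m ^ N - 1) \<le> c"
    using abs_power_minus_one_le[OF assms(1)] assms(3) order_trans by blast
  ultimately have "absv (qsum (r ^ m ^ N) m) \<le> c"
    using abs_qsum_le_max[of "r ^ m ^ N" m] assms(2) by linarith
  moreover have "qsum r (m ^ Suc N) = qsum r (m ^ N) * qsum (r ^ m ^ N) m"
    using qsum_mult[of r "m ^ N" m] by (simp add: mult.commute)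
  moreover have "0 \<le> c" using assms(3) abs_nonneg order_trans by blast
  ultimately have "absv (qsum r (m ^ Suc N)) \<le> c ^ N * c"
    using Suc by (simp add: abs_mult mult_mono abs_nonneg)
  then show ?case by (simp add: mult.commute)
qed (simp add: qsum_def)

lemma abs_power_diff_le:
  assumes "absv x \<le> 1" "absv y \<le> 1"
  shows "absv (x ^ k - y ^ k) \<le> absv (x - y)"
proof -
  have "absv (\<Sum>i<k. y ^ (k - Suc i) * x ^ i) \<le> 1"
    by (rule abs_sum_le) (use assms in \<open>auto simp: abs_mult abs_power power_le_one mult_le_one abs_nonneg\<close>)
  then show ?thesis
    using power_diff_sumr2[of x k y] abs_mult_le abs_mult by (metis mult.commute order_refl)
qed

lemma abs_lim_unique:
  assumes "abs_lim absv s a" "abs_lim absv s b"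
  shows "a = b"
proof (rule ccontr)
  assume "a \<noteq> b"
  then have e: "absv (a - b) > 0" using abs_eq_0_iff[of "a - b"] abs_nonneg[of "a - b"] by simp
  obtain N1 where "\<forall>N\<ge>N1. absv (s N - a) < absv (a - b)"
    using assms(1) e unfolding abs_lim_def by blast
  moreover obtain N2 where "\<forall>N\<ge>N2. absv (s N - b) < absv (a - b)"
    using assms(2) e unfolding abs_lim_def by blast
  moreover define M where "M = max N1 N2"
  ultimately have "absv (s M - b) < absv (a - b)" "absv (s M - a) < absv (a - b)"
    by auto
  then have "absv (s M - b + - (s M - a)) < absv (a - b)"
    by (intro abs_add_less) (simp_all only: abs_minus)
  then show False by simp
qed

lemma abs_lim_add:
  assumes "abs_lim absv s a" "abs_lim absv t b"
  shows "abs_lim absv (\<lambda>N. s N + t N) (a + b)"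
  unfolding abs_lim_def
proof (intro allI impI)
  fix e :: real assume "e > 0"
  then obtain N1 N2 where "\<forall>N\<ge>N1. absv (s N - a) < e" "\<forall>N\<ge>N2. absv (t N - b) < e"
    using assms unfolding abs_lim_def by meson
  then have "absv (s N + t N - (a + b)) < e" if "max N1 N2 \<le> N" for N
    using that abs_add_less[of "s N - a" e "t N - b"] by (simp add: add_diff_add)
  then show "\<exists>N0. \<forall>N\<ge>N0. absv (s N + t N - (a + b)) < e" by blast
qed

lemma abs_lim_cmult:
  assumes "abs_lim absv s a"
  shows "abs_lim absv (\<lambda>N. k * s N) (k * a)"
proof (cases "k = 0")
  case False
  then have k: "absv k > 0" using abs_eq_0_iff abs_nonneg[of k] by force
  show ?thesis unfolding abs_lim_def
  proof (intro allI impI)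
    fix e :: real assume "e > 0"
    then have "e / absv k > 0" using k by simp
    then obtain N0 where "\<forall>N\<ge>N0. absv (s N - a) < e / absv k"
      using assms unfolding abs_lim_def by blast
    then have "absv k * absv (s N - a) < e" if "N0 \<le> N" for N
      using that k by (simp add: pos_less_divide_eq mult.commute)
    then have "absv (k * s N - k * a) < e" if "N0 \<le> N" for N
      using that by (simp add: abs_mult flip: right_diff_distrib)
    then show "\<exists>N0. \<forall>N\<ge>N0. absv (k * s N - k * a) < e" by blast
  qed
qed (simp add: abs_lim_def)

lemma abs_lim_of_geometric_bound:
  assumes "c < 1" "\<And>N. absv (s N - L) \<le> c ^ N"
  shows "abs_lim absv s L"
  unfolding abs_lim_def
proof (intro allI impI)
  fix e :: real assume e: "e > 0"
  have c: "0 \<le> c" using assms(2)[of 1] abs_nonneg[of "s 1 - L"] by simp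
  obtain N where N: "c ^ N < e" using real_arch_pow_inv[OF e assms(1)] by blast
  have "absv (s n - L) < e" if "N \<le> n" for n
  proof -
    have "c ^ n \<le> c ^ N" using that assms(1) c by (simp add: power_decreasing)
    then show ?thesis using assms(2)[of n] N by linarith
  qed
  then show "\<exists>N0. \<forall>n\<ge>N0. absv (s n - L) < e" by blast
qed

lemma abs_diff_le_of_geometric_steps:
  assumes "0 \<le> c" "c \<le> 1" "\<And>N. absv (s (Suc N) - s N) \<le> c ^ N" "N \<le> n"
  shows "absv (s n - s N) \<le> c ^ N"
  using assms(4)
proof (induction n rule: dec_induct)
  case (step n)
  have "absv (s (Suc n) - s n) \<le> c ^ N"
    using assms(3)[of n] power_decreasing[OF step(1) assms(1,2)] by linarith
  then show ?case
    using step(3) abs_add_le[of "s (Suc n) - s n" _ "s n - s N"] by simp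
qed (simp add: assms(1))

lemma cauchy_of_geometric_steps:
  assumes "0 \<le> c" "c < 1" "\<And>N. absv (s (Suc N) - s N) \<le> c ^ N"
  shows "\<forall>e>0. \<exists>N0. \<forall>m\<ge>N0. \<forall>n\<ge>N0. absv (s m - s n) < e"
proof (intro allI impI)
  fix e :: real assume e: "e > 0"
  obtain N where N: "c ^ N < e" using real_arch_pow_inv[OF e assms(2)] by blast
  have "absv (s m - s n) < e" if "N \<le> m" "N \<le> n" for m n
  proof -
    have "absv (s m - s N) \<le> c ^ N" "absv (s n - s N) \<le> c ^ N"
      using abs_diff_le_of_geometric_steps[OF assms(1) _ assms(3)] assms(2) that by auto
    then have "absv ((s m - s N) - (s n - s N)) \<le> c ^ N" by (rule abs_diff_le)
    then show ?thesis using N by simp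
  qed
  then show "\<exists>N0. \<forall>m\<ge>N0. \<forall>n\<ge>N0. absv (s m - s n) < e" by blast
qed

end

definition genocchi_integrand :: "'a::field_char_0 \<Rightarrow> nat \<Rightarrow> nat \<Rightarrow> nat \<Rightarrow> nat \<Rightarrow> nat \<Rightarrow> 'a" where
  "genocchi_integrand q \<alpha> h n x \<xi> = q ^ ((h - 1) * \<xi>) * qsum (q ^ \<alpha>) (x + \<xi>) ^ (n - 1)"

lemma genocchi_of_nat:
  "n \<noteq> 0 \<Longrightarrow>
     genocchi absv p q \<alpha> h n (int x) = of_nat n * ferm_int absv p q (genocchi_integrand q \<alpha> h n x)"
  unfolding genocchi_def genocchi_integrand_def by (simp flip: qnum_of_nat)

lemma genocchi_integrand_Suc:
  "genocchi_integrand q \<alpha> h n x (Suc \<xi>) = q ^ (h - 1) * genocchi_integrand q \<alpha> h n (Suc x) \<xi>"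
  unfolding genocchi_integrand_def by (simp add: power_add mult_Suc_right)

locale fermionic_setting = nonarch_abs absv for absv :: "'a::field_char_0 \<Rightarrow> real" +
  fixes p :: nat and q :: 'a
  assumes prime_p: "prime p"
    and odd_p: "odd p"
    and abs_of_nat_p: "absv (of_nat p) = 1 / real p"
    and complete: "\<And>s. \<forall>e>0. \<exists>N0. \<forall>m\<ge>N0. \<forall>n\<ge>N0. absv (s m - s n) < e
                    \<Longrightarrow> \<exists>L. abs_lim absv s L"
    and abs_q_minus_1: "absv (q - 1) < 1"
begin

text \<open>This is where \<open>p \<noteq> 2\<close> is needed: it makes \<open>[2]\<^sub>q\<close> and the normalisations
  \<open>[p\<^sup>N]\<^sub>-\<^sub>q\<close> units.\<close>
lemma abs_two: "absv 2 = 1"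
proof -
  obtain m where m: "p = 2 * m + 1" using odd_p oddE by blast
  have "absv (of_nat p :: 'a) < 1" using abs_of_nat_p prime_gt_1_nat[OF prime_p] by simp
  moreover have "absv (2 * of_nat m :: 'a) \<le> absv 2"
    using abs_mult[of 2 "of_nat m"] abs_of_nat_le_1[of m] abs_nonneg[of 2] by (simp add: mult_left_le)
  moreover have "(1::'a) = of_nat p - 2 * of_nat m" using m by simp
  then have "absv (1::'a) \<le> max (absv (of_nat p :: 'a)) (absv (2 * of_nat m :: 'a))"
    using abs_diff_le_max by metis
  ultimately show ?thesis using abs_of_nat_le_1[of 2] by simp
qed

lemma abs_q: "absv q = 1"
  using abs_add_eq_of_less[of "q - 1" 1] abs_q_minus_1 by simp

lemma abs_power_q_minus_1: "absv (q ^ k - 1) < 1"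
  using abs_power_minus_one_le[OF abs_q, of k] abs_q_minus_1 by linarith

lemma abs_one_plus_power_q: "absv (1 + q ^ k) = 1"
proof -
  have "absv ((q ^ k - 1) + 2) = 1"
    using abs_add_eq_of_less abs_power_q_minus_1[of k] abs_two by metis
  then show ?thesis by (simp add: add.commute)
qed

lemma abs_one_plus_q: "absv (1 + q) = 1"
  using abs_one_plus_power_q[of 1] by simp

lemma one_plus_power_q_nonzero: "1 + q ^ k \<noteq> 0"
  using abs_one_plus_power_q[of k] by auto

definition rate :: real where
  "rate = max (1 / real p) (absv (q - 1))"

lemma rate_nonneg: "0 \<le> rate"
  unfolding rate_def by (simp add: le_max_iff_disj)

lemma rate_less_1: "rate < 1"
  using prime_gt_1_nat[OF prime_p] abs_q_minus_1 unfolding rate_def by simp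

definition padic_lipschitz :: "(nat \<Rightarrow> 'a) \<Rightarrow> bool" where
  "padic_lipschitz f \<longleftrightarrow> (\<forall>N \<xi> j. absv (f (\<xi> + j * p ^ N) - f \<xi>) \<le> rate ^ N)"

definition riemann_sum :: "(nat \<Rightarrow> 'a) \<Rightarrow> nat \<Rightarrow> 'a" where
  "riemann_sum f N = (1 + q) / (1 + q ^ p ^ N) * (\<Sum>\<xi><p ^ N. f \<xi> * (- q) ^ \<xi>)"

lemma ferm_int_eq_The: "ferm_int absv p q f = (THE L. abs_lim absv (riemann_sum f) L)"
  unfolding ferm_int_def riemann_sum_def by simp

lemma riemann_sum_Suc:
  "riemann_sum f (Suc N) = riemann_sum f N + (1 + q) / (1 + q ^ p ^ Suc N) *
     (\<Sum>j<p. \<Sum>\<xi><p ^ N. (f (\<xi> + j * p ^ N) - f \<xi>) * (- q) ^ (\<xi> + j * p ^ N))"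
proof -
  define M where "M = p ^ N"
  define T where "T = (\<Sum>\<xi><M. f \<xi> * (- q) ^ \<xi>)"
  define G where "G = (\<Sum>j<p. (- q) ^ (j * M))"
  define E where "E = (\<Sum>j<p. \<Sum>\<xi><M. (f (\<xi> + j * M) - f \<xi>) * (- q) ^ (\<xi> + j * M))"
  have "(\<Sum>\<xi><p * M. f \<xi> * (- q) ^ \<xi>) = (\<Sum>j<p. \<Sum>\<xi><M. f (\<xi> + j * M) * (- q) ^ (\<xi> + j * M))"
    by (rule sum_lessThan_mult_blocks)
  also have "\<dots> = (\<Sum>j<p. \<Sum>\<xi><M. f \<xi> * (- q) ^ \<xi> * (- q) ^ (j * M)
                      + (f (\<xi> + j * M) - f \<xi>) * (- q) ^ (\<xi> + j * M))"
    by (intro sum.cong refl) (simp add: algebra_simps power_add)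
  also have "\<dots> = T * G + E"
    unfolding T_def G_def E_def by (simp add: sum.distrib sum_distrib_left sum_distrib_right)
  finally have blocks: "(\<Sum>\<xi><p * M. f \<xi> * (- q) ^ \<xi>) = T * G + E" .
  have G: "(1 + q ^ M) * G = 1 + q ^ (M * p)"
    unfolding G_def M_def using odd_p by (intro alternating_power_sum) simp_all
  have "G \<noteq> 0" using G one_plus_power_q_nonzero by (metis mult_zero_right)
  then have "(1 + q) / (1 + q ^ (M * p)) * (T * G) = (1 + q) / (1 + q ^ M) * T"
    by (simp flip: G)
  then show ?thesis
    unfolding riemann_sum_def using blocks
    by (simp add: M_def T_def E_def mult.commute distrib_left)
qed

lemma riemann_sum_Suc_diff:
  assumes "padic_lipschitz f"
  shows "absv (riemann_sum f (Suc N) - riemann_sum f N) \<le> rate ^ N"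
proof -
  have "absv (\<Sum>j<p. \<Sum>\<xi><p ^ N. (f (\<xi> + j * p ^ N) - f \<xi>) * (- q) ^ (\<xi> + j * p ^ N)) \<le> rate ^ N"
    using assms rate_nonneg unfolding padic_lipschitz_def
    by (intro abs_sum_le) (auto simp: abs_mult abs_power abs_q)
  then show ?thesis
    unfolding riemann_sum_Suc by (simp add: abs_mult abs_divide abs_one_plus_power_q abs_one_plus_q)
qed

lemma ferm_int_eqI: "abs_lim absv (riemann_sum f) L \<Longrightarrow> ferm_int absv p q f = L"
  unfolding ferm_int_eq_The by (metis abs_lim_unique the_equality)

lemma ferm_int_limit:
  assumes "padic_lipschitz f"
  shows "abs_lim absv (riemann_sum f) (ferm_int absv p q f)"
proof -
  obtain L where "abs_lim absv (riemann_sum f) L"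
    using complete cauchy_of_geometric_steps[OF rate_nonneg rate_less_1 riemann_sum_Suc_diff[OF assms]]
    by blast
  then show ?thesis using ferm_int_eqI by simp
qed

lemma ferm_int_cmult:
  assumes "padic_lipschitz f"
  shows "ferm_int absv p q (\<lambda>\<xi>. k * f \<xi>) = k * ferm_int absv p q f"
proof (rule ferm_int_eqI)
  have "riemann_sum (\<lambda>\<xi>. k * f \<xi>) = (\<lambda>N. k * riemann_sum f N)"
    unfolding riemann_sum_def by (simp add: sum_distrib_left algebra_simps)
  then show "abs_lim absv (riemann_sum (\<lambda>\<xi>. k * f \<xi>)) (k * ferm_int absv p q f)"
    using abs_lim_cmult[OF ferm_int_limit[OF assms]] by simp
qed

lemma padic_lipschitz_Suc: "padic_lipschitz f \<Longrightarrow> padic_lipschitz (\<lambda>\<xi>. f (Suc \<xi>))"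
  unfolding padic_lipschitz_def by (metis add_Suc)

text \<open>For odd \<open>M = p\<^sup>N\<close> the alternating sums telescope to
  \<open>q S\<^sub>N(f(\<xi> + 1)) + S\<^sub>N(f) = [2]\<^sub>q (f(0) + q\<^sup>M f(M)) / (1 + q\<^sup>M)\<close>, which differs from
  \<open>[2]\<^sub>q f(0)\<close> by a unit times \<open>f(M) - f(0)\<close>.\<close>
lemma ferm_int_shift:
  assumes f: "padic_lipschitz f"
  shows "q * ferm_int absv p q (\<lambda>\<xi>. f (Suc \<xi>)) + ferm_int absv p q f = (1 + q) * f 0"
proof -
  let ?S = "\<lambda>N. q * riemann_sum (\<lambda>\<xi>. f (Suc \<xi>)) N + riemann_sum f N"
  have "absv (?S N - (1 + q) * f 0) \<le> rate ^ N" for N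
  proof -
    define M where "M = p ^ N"
    have "?S N = (1 + q) / (1 + q ^ M) *
        (q * (\<Sum>\<xi><M. f (Suc \<xi>) * (- q) ^ \<xi>) + (\<Sum>\<xi><M. f \<xi> * (- q) ^ \<xi>))"
      unfolding riemann_sum_def M_def by (simp add: algebra_simps)
    also have "\<dots> = (1 + q) / (1 + q ^ M) * (f 0 + q ^ M * f M)"
      using alternating_sum_shift[of M q f] odd_p by (simp add: M_def)
    also have "\<dots> = (1 + q) * f 0 + (1 + q) * q ^ M / (1 + q ^ M) * (f M - f 0)"
      using one_plus_power_q_nonzero by (simp add: field_simps)
    finally have "absv (?S N - (1 + q) * f 0) = absv (f M - f 0)"
      by (simp add: abs_mult abs_divide abs_power abs_q abs_one_plus_q
          abs_one_plus_power_q)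
    also have "\<dots> \<le> rate ^ N"
      using f unfolding padic_lipschitz_def M_def by (metis add_0 mult_1)
    finally show ?thesis .
  qed
  then have "abs_lim absv ?S ((1 + q) * f 0)"
    by (rule abs_lim_of_geometric_bound[OF rate_less_1])
  moreover have "abs_lim absv ?S (q * ferm_int absv p q (\<lambda>\<xi>. f (Suc \<xi>)) + ferm_int absv p q f)"
    using abs_lim_add[OF abs_lim_cmult ferm_int_limit] ferm_int_limit padic_lipschitz_Suc f by blast
  ultimately show ?thesis using abs_lim_unique by blast
qed

lemma padic_lipschitz_mult:
  assumes "padic_lipschitz f" "padic_lipschitz g" "\<And>\<xi>. absv (f \<xi>) \<le> 1" "\<And>\<xi>. absv (g \<xi>) \<le> 1"
  shows "padic_lipschitz (\<lambda>\<xi>. f \<xi> * g \<xi>)"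
  unfolding padic_lipschitz_def
proof (intro allI)
  fix N \<xi> j
  let ?\<eta> = "\<xi> + j * p ^ N"
  have "f ?\<eta> * g ?\<eta> - f \<xi> * g \<xi> = f ?\<eta> * (g ?\<eta> - g \<xi>) + g \<xi> * (f ?\<eta> - f \<xi>)"
    by (simp add: algebra_simps)
  moreover have "absv (f ?\<eta> * (g ?\<eta> - g \<xi>)) \<le> rate ^ N" "absv (g \<xi> * (f ?\<eta> - f \<xi>)) \<le> rate ^ N"
    using assms(1,2) unfolding padic_lipschitz_def by (simp_all add: abs_mult_le assms(3,4))
  ultimately show "absv (f ?\<eta> * g ?\<eta> - f \<xi> * g \<xi>) \<le> rate ^ N"
    by (simp add: abs_add_le)
qed

lemma padic_lipschitz_power:
  assumes "padic_lipschitz f" "\<And>\<xi>. absv (f \<xi>) \<le> 1"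
  shows "padic_lipschitz (\<lambda>\<xi>. f \<xi> ^ k)"
  unfolding padic_lipschitz_def
proof (intro allI)
  fix N \<xi> j
  have "absv (f (\<xi> + j * p ^ N) ^ k - f \<xi> ^ k) \<le> absv (f (\<xi> + j * p ^ N) - f \<xi>)"
    by (rule abs_power_diff_le) (simp_all add: assms(2))
  then show "absv (f (\<xi> + j * p ^ N) ^ k - f \<xi> ^ k) \<le> rate ^ N"
    using assms(1) unfolding padic_lipschitz_def by (meson order_trans)
qed

lemma abs_qsum_power_p_le: "absv r = 1 \<Longrightarrow> absv (r - 1) \<le> rate \<Longrightarrow> absv (qsum r (p ^ N)) \<le> rate ^ N"
  by (rule abs_qsum_power_le) (simp_all add: abs_of_nat_p rate_def)

lemma padic_lipschitz_geometric:
  assumes r: "absv r = 1" "absv (r - 1) \<le> rate"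
  shows "padic_lipschitz (\<lambda>\<xi>. r ^ \<xi>)"
  unfolding padic_lipschitz_def
proof (intro allI)
  fix N \<xi> j
  have "absv ((r ^ p ^ N) ^ j - 1) \<le> absv (r ^ p ^ N - 1)"
    using r(1) by (intro abs_power_minus_one_le) (simp add: abs_power)
  also have "\<dots> \<le> absv (qsum r (p ^ N))"
    using r rate_less_1 by (simp add: power_minus_one_eq_qsum abs_mult mult_left_le_one_le abs_nonneg)
  also have "\<dots> \<le> rate ^ N" using abs_qsum_power_p_le[OF r] .
  moreover have "r ^ (\<xi> + j * p ^ N) - r ^ \<xi> = r ^ \<xi> * ((r ^ p ^ N) ^ j - 1)"
    by (simp add: power_add mult.commute right_diff_distrib flip: power_mult)
  ultimately show "absv (r ^ (\<xi> + j * p ^ N) - r ^ \<xi>) \<le> rate ^ N"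
    using r(1) by (simp add: abs_mult abs_power)
qed

lemma padic_lipschitz_qsum:
  assumes r: "absv r = 1" "absv (r - 1) \<le> rate"
  shows "padic_lipschitz (\<lambda>\<xi>. qsum r (m + \<xi>))"
  unfolding padic_lipschitz_def
proof (intro allI)
  fix N \<xi> j
  have "qsum r (m + (\<xi> + j * p ^ N)) - qsum r (m + \<xi>) = r ^ (m + \<xi>) * (qsum (r ^ p ^ N) j * qsum r (p ^ N))"
    using qsum_add[of r "m + \<xi>" "p ^ N * j"] qsum_mult[of r "p ^ N" j] by (simp add: add.assoc mult.commute)
  moreover have "absv (qsum (r ^ p ^ N) j * qsum r (p ^ N)) \<le> rate ^ N"
    using r abs_qsum_power_p_le by (intro abs_mult_le abs_qsum_le_1) (simp_all add: abs_power)
  ultimately show "absv (qsum r (m + (\<xi> + j * p ^ N)) - qsum r (m + \<xi>)) \<le> rate ^ N"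
    using r(1) by (simp add: abs_mult abs_power)
qed

lemma abs_power_q_minus_1_le_rate: "absv (q ^ k - 1) \<le> rate"
  using abs_power_minus_one_le[OF abs_q] unfolding rate_def by (meson le_max_iff_disj)

lemma padic_lipschitz_genocchi_integrand: "padic_lipschitz (genocchi_integrand q \<alpha> h n x)"
proof -
  have "padic_lipschitz (\<lambda>\<xi>. (q ^ (h - 1)) ^ \<xi>)"
    by (rule padic_lipschitz_geometric) (simp_all add: abs_power abs_q abs_power_q_minus_1_le_rate)
  moreover have "padic_lipschitz (\<lambda>\<xi>. qsum (q ^ \<alpha>) (x + \<xi>) ^ (n - 1))"
    by (intro padic_lipschitz_power padic_lipschitz_qsum abs_qsum_le_1)
      (simp_all add: abs_power abs_q abs_power_q_minus_1_le_rate)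
  ultimately show ?thesis
    unfolding genocchi_integrand_def power_mult
    by (intro padic_lipschitz_mult) (simp_all add: abs_power abs_q abs_qsum_le_1 power_le_one abs_nonneg)
qed

lemma genocchi_recurrence:
  assumes "h \<ge> 1" "n \<noteq> 0"
  shows "q ^ h * genocchi absv p q \<alpha> h n (int (Suc x)) + genocchi absv p q \<alpha> h n (int x)
           = of_nat n * (1 + q) * qsum (q ^ \<alpha>) x ^ (n - 1)"
proof -
  let ?I = "\<lambda>x. ferm_int absv p q (genocchi_integrand q \<alpha> h n x)"
  have shift: "q * ferm_int absv p q (\<lambda>\<xi>. genocchi_integrand q \<alpha> h n x (Suc \<xi>)) + ?I x
          = (1 + q) * genocchi_integrand q \<alpha> h n x 0"
    by (rule ferm_int_shift[OF padic_lipschitz_genocchi_integrand])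
  have cmult: "ferm_int absv p q (\<lambda>\<xi>. genocchi_integrand q \<alpha> h n x (Suc \<xi>)) = q ^ (h - 1) * ?I (Suc x)"
    by (simp add: genocchi_integrand_Suc ferm_int_cmult padic_lipschitz_genocchi_integrand)
  have power: "q * (q ^ (h - 1) * ?I (Suc x)) = q ^ h * ?I (Suc x)"
    using assms(1) by (simp add: mult.assoc[symmetric] flip: power_Suc)
  have at_0: "genocchi_integrand q \<alpha> h n x 0 = qsum (q ^ \<alpha>) x ^ (n - 1)"
    by (simp add: genocchi_integrand_def)
  note shift[unfolded cmult power at_0]
  then show ?thesis
    unfolding genocchi_of_nat[OF assms(2)] by (simp add: algebra_simps flip: distrib_left)
qed

end

theorem mainTheorem3:
  fixes absv :: "'a::field_char_0 \<Rightarrow> real" and p :: nat and q :: 'a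
    and \<alpha> h n :: nat
  assumes "prime p" and "odd p" and "Cp_like absv p"
    and "absv (q - 1) < 1" and "h \<ge> 1" and "n > 1"
  shows "genocchi absv p q \<alpha> h n 2 =
           of_nat n * q powi (- int h) * qnum q 2
           + q powi (- (2 * int h)) * genocchi absv p q \<alpha> h n 0"
proof -
  interpret fermionic_setting absv p q
    using assms unfolding Cp_like_def by unfold_locales auto
  let ?G = "genocchi absv p q \<alpha> h n"
  have "q \<noteq> 0" using abs_q by auto
  then have nz: "q ^ h \<noteq> 0" by simp
  have "q ^ h * ?G 1 + ?G 0 = 0"
    using genocchi_recurrence[where x = 0] assms(5,6) by (simp add: qsum_def)
  then have "q ^ h * ?G 1 = - ?G 0" by (simp add: eq_neg_iff_add_eq_0)
  then have G1: "?G 1 = - ?G 0 / q ^ h" using nz by (metis nonzero_mult_div_cancel_left)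
  have "q ^ h * ?G 2 + ?G 1 = of_nat n * (1 + q)"
    using genocchi_recurrence[where x = 1] assms(5,6) by (simp add: qsum_def numeral_2_eq_2)
  then have "q ^ h * ?G 2 = of_nat n * (1 + q) - ?G 1" by (simp add: eq_diff_eq)
  then have G2: "?G 2 = (of_nat n * (1 + q) - ?G 1) / q ^ h" using nz by (metis nonzero_mult_div_cancel_left)
  have "qnum q (int 2) = qsum q 2" by (rule qnum_of_nat)
  then have "qnum q 2 = 1 + q" by (simp add: qsum_def eval_nat_numeral)
  moreover have "q powi (- int h) = inverse (q ^ h)"
    by (simp add: power_int_minus)
  moreover have "q powi (- (2 * int h)) = inverse (q ^ h) * inverse (q ^ h)"
  proof -
    have "2 * int h = int (2 * h)" by simp
    then have "q powi (- (2 * int h)) = inverse (q ^ (2 * h))"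
      by (simp only: power_int_minus power_int_of_nat)
    also have "q ^ (2 * h) = q ^ h * q ^ h" by (simp only: mult_2 power_add)
    finally show ?thesis by (simp only: inverse_mult_distrib)
  qed
  ultimately show ?thesis
    unfolding G2 G1 using nz by (simp add: field_simps)
qed

end
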